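(* Let $(q,E)$ be an annotated CQ (a CQ $q$ together with a collection $E=(E^+,E^-)$ of labeled examples of the same arity as $q$), and let $q'$ be a CQ. Then: (1) $q'$ is a $\preceq^{\mathrm{cod}}$-generalization for $(q,E)$ if and only if $q'$ is a containment-based generalization for $(q,E)$; (2) $q'$ is a $\preceq^{\mathrm{cod}}$-specialization for $(q,E)$ if and only if $q'$ is a containment-based specialization for $(q,E)$.
   Context: A schema is a finite set of relation symbols with arities; a database instance is a finite set of facts $R(a_1,\dots,a_n)$. A data example of arity $k$ is a pair $(I,\mathbf a)$ with $I$ an instance and $\mathbf a$ a $k$-tuple of values of $I$. A $k$-ary conjunctive query (CQ) is $q(x_1,\dots,x_k)\text{ :- }\alpha_1,\dots,\alpha_n$ with relational atoms $\alpha_i$ without constants, where every answer variable occurs in some atom; $q(I)$ is its usual set of answers. For a query $q$, $[\![q]\!]$ is the set of data examples $(I,\mathbf a)$ with $\mathbf a\in q(I)$. $q_1\subseteq q_2$ means $q_1(I)\subseteq q_2(I)$ for all instances $I$; $q_1\equiv q_2$ means containment both ways; $q_1\subsetneq q_2$ means $q_1\subseteq q_2$ and $q_1\not\equiv q_2$. A collection of labeled examples is $E=(E^+,E^-)$ (sets of positive and negative data examples); $q$ fits $E$ if $E^+\subseteq [\![q]\!]$ and $E^-\cap[\![q]\!]=\emptyset$. Candidate queries are CQs using only relation symbols occurring in $q$ or $E$. Containment of difference: $q_1\preceq^{\mathrm{cod}}_q q_2$ iff $[\![q]\!]\oplus[\![q_1]\!]\subseteq[\![q]\!]\oplus[\![q_2]\!]$,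 where $\oplus$ is symmetric difference; $q_1\prec_q q_2$ means $q_1\preceq_q q_2$ and not $q_2\preceq_q q_1$. For a family of pre-orders $\preceq=(\preceq_q)_q$: a $\preceq$-generalization for $(q,E)$ is a CQ $q'$ with (i) $q'$ fits $E$ and $q\subseteq q'$, and (ii) no CQ $q''$ satisfying (i) has $q''\prec_q q'$; a $\preceq$-specialization is defined the same way with $q'\subseteq q$ (resp. $q''\subseteq q$) in place of $q\subseteq q'$. A containment-based generalization for $(q,E)$ is a CQ $q'$ fitting $E$ with $q\subseteq q'$ such that there is no CQ $q''$ fitting $E$ with $q\subseteq q''\subsetneq q'$. A containment-based specialization for $(q,E)$ is a CQ $q'$ fitting $E$ with $q'\subseteq q$ such that there is no CQ $q''$ fitting $E$ with $q'\subsetneq q''\subseteq q$. *)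

theory Defs
  imports Main
begin

(* Relation symbols have type 'r, with arity given by a function ar :: 'r => nat (the schema).
   Values have type 'v; query variables are natural numbers. *)

type_synonym ('r,'v) fact = "'r \<times> 'v list"
type_synonym ('r,'v) inst = "('r,'v) fact set"
type_synonym ('r,'v) data_example = "('r,'v) inst \<times> 'v list"
type_synonym ('r,'v) examples = "('r,'v) data_example set \<times> ('r,'v) data_example set"

definition wf_instance :: "('r \<Rightarrow> nat) \<Rightarrow> ('r,'v) inst \<Rightarrow> bool" where
  "wf_instance ar I \<longleftrightarrow> finite I \<and> (\<forall>(R,as)\<in>I. length as = ar R)"

definition adom :: "('r,'v) inst \<Rightarrow> 'v set" where
  "adom I = (\<Union>(R,as)\<in>I. set as)"

definition rels_inst :: "('r,'v) inst \<Rightarrow> 'r set" where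
  "rels_inst I = fst ` I"

definition data_example :: "('r \<Rightarrow> nat) \<Rightarrow> nat \<Rightarrow> ('r,'v) data_example \<Rightarrow> bool" where
  "data_example ar k e \<longleftrightarrow> wf_instance ar (fst e) \<and> length (snd e) = k \<and> set (snd e) \<subseteq> adom (fst e)"

(* A CQ q(x1..xk) :- atoms; answer variables and atoms over variables (nat), no constants. *)
datatype 'r cq = CQ (ans: "nat list") (atoms: "('r \<times> nat list) list")

definition is_cq :: "('r \<Rightarrow> nat) \<Rightarrow> 'r cq \<Rightarrow> bool" where
  "is_cq ar q \<longleftrightarrow> (\<forall>(R,ys)\<in>set (atoms q). length ys = ar R)
      \<and> (\<forall>x\<in>set (ans q). \<exists>(R,ys)\<in>set (atoms q). x \<in> set ys)"

definition rels_cq :: "'r cq \<Rightarrow> 'r set" where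
  "rels_cq q = fst ` set (atoms q)"

definition answers :: "'r cq \<Rightarrow> ('r,'v) inst \<Rightarrow> 'v list set" where
  "answers q I = {map h (ans q) | h. \<forall>(R,ys)\<in>set (atoms q). (R, map h ys) \<in> I}"

definition sem :: "('r \<Rightarrow> nat) \<Rightarrow> 'r cq \<Rightarrow> ('r,'v) data_example set" where
  "sem ar q = {(I,a). wf_instance ar I \<and> a \<in> answers q I}"

definition contained :: "'v itself \<Rightarrow> ('r \<Rightarrow> nat) \<Rightarrow> 'r cq \<Rightarrow> 'r cq \<Rightarrow> bool" where
  "contained tv ar q1 q2 \<longleftrightarrow> (\<forall>I::('r,'v) inst. wf_instance ar I \<longrightarrow> answers q1 I \<subseteq> answers q2 I)"

definition cq_equiv :: "'v itself \<Rightarrow> ('r \<Rightarrow> nat) \<Rightarrow> 'r cq \<Rightarrow> 'r cq \<Rightarrow> bool" where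
  "cq_equiv tv ar q1 q2 \<longleftrightarrow> contained tv ar q1 q2 \<and> contained tv ar q2 q1"

definition strictly_contained :: "'v itself \<Rightarrow> ('r \<Rightarrow> nat) \<Rightarrow> 'r cq \<Rightarrow> 'r cq \<Rightarrow> bool" where
  "strictly_contained tv ar q1 q2 \<longleftrightarrow> contained tv ar q1 q2 \<and> \<not> cq_equiv tv ar q1 q2"

definition fits :: "('r \<Rightarrow> nat) \<Rightarrow> 'r cq \<Rightarrow> ('r,'v) examples \<Rightarrow> bool" where
  "fits ar q E \<longleftrightarrow> fst E \<subseteq> sem ar q \<and> snd E \<inter> sem ar q = {}"

definition rels_examples :: "('r,'v) examples \<Rightarrow> 'r set" where
  "rels_examples E = (\<Union>e\<in>fst E \<union> snd E. rels_inst (fst e))"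

definition candidate :: "('r \<Rightarrow> nat) \<Rightarrow> 'r cq \<Rightarrow> ('r,'v) examples \<Rightarrow> 'r cq \<Rightarrow> bool" where
  "candidate ar q E q' \<longleftrightarrow> is_cq ar q' \<and> rels_cq q' \<subseteq> rels_cq q \<union> rels_examples E"

definition annotated :: "('r \<Rightarrow> nat) \<Rightarrow> 'r cq \<Rightarrow> ('r,'v) examples \<Rightarrow> bool" where
  "annotated ar q E \<longleftrightarrow> is_cq ar q \<and> (\<forall>e\<in>fst E \<union> snd E. data_example ar (length (ans q)) e)"

definition symdiff :: "'a set \<Rightarrow> 'a set \<Rightarrow> 'a set" where
  "symdiff A B = (A - B) \<union> (B - A)"

(* containment of difference: cod_le ar q q1 q2  means  q1 \<preceq>^cod_q q2 *)
definition cod_le :: "('r \<Rightarrow> nat) \<Rightarrow> 'v itself \<Rightarrow> 'r cq \<Rightarrow> 'r cq \<Rightarrow> 'r cq \<Rightarrow> bool" where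
  "cod_le ar tv q q1 q2 \<longleftrightarrow>
     symdiff (sem ar q :: ('r,'v) data_example set) (sem ar q1) \<subseteq> symdiff (sem ar q) (sem ar q2)"

definition gen_cond :: "('r \<Rightarrow> nat) \<Rightarrow> 'r cq \<Rightarrow> ('r,'v) examples \<Rightarrow> 'r cq \<Rightarrow> bool" where
  "gen_cond ar q E q' \<longleftrightarrow> candidate ar q E q' \<and> fits ar q' E \<and> contained TYPE('v) ar q q'"

definition spec_cond :: "('r \<Rightarrow> nat) \<Rightarrow> 'r cq \<Rightarrow> ('r,'v) examples \<Rightarrow> 'r cq \<Rightarrow> bool" where
  "spec_cond ar q E q' \<longleftrightarrow> candidate ar q E q' \<and> fits ar q' E \<and> contained TYPE('v) ar q' q"

definition pre_generalization ::
  "('r cq \<Rightarrow> 'r cq \<Rightarrow> 'r cq \<Rightarrow> bool) \<Rightarrow> ('r \<Rightarrow> nat) \<Rightarrow> 'r cq \<Rightarrow> ('r,'v) examples \<Rightarrow> 'r cq \<Rightarrow> bool" where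
  "pre_generalization le ar q E q' \<longleftrightarrow> gen_cond ar q E q' \<and>
     \<not> (\<exists>q''. gen_cond ar q E q'' \<and> le q q'' q' \<and> \<not> le q q' q'')"

definition pre_specialization ::
  "('r cq \<Rightarrow> 'r cq \<Rightarrow> 'r cq \<Rightarrow> bool) \<Rightarrow> ('r \<Rightarrow> nat) \<Rightarrow> 'r cq \<Rightarrow> ('r,'v) examples \<Rightarrow> 'r cq \<Rightarrow> bool" where
  "pre_specialization le ar q E q' \<longleftrightarrow> spec_cond ar q E q' \<and>
     \<not> (\<exists>q''. spec_cond ar q E q'' \<and> le q q'' q' \<and> \<not> le q q' q'')"

definition cont_generalization :: "('r \<Rightarrow> nat) \<Rightarrow> 'r cq \<Rightarrow> ('r,'v) examples \<Rightarrow> 'r cq \<Rightarrow> bool" where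
  "cont_generalization ar q E q' \<longleftrightarrow> gen_cond ar q E q' \<and>
     \<not> (\<exists>q''. gen_cond ar q E q'' \<and> strictly_contained TYPE('v) ar q'' q')"

definition cont_specialization :: "('r \<Rightarrow> nat) \<Rightarrow> 'r cq \<Rightarrow> ('r,'v) examples \<Rightarrow> 'r cq \<Rightarrow> bool" where
  "cont_specialization ar q E q' \<longleftrightarrow> spec_cond ar q E q' \<and>
     \<not> (\<exists>q''. spec_cond ar q E q'' \<and> strictly_contained TYPE('v) ar q' q'')"

end

theory Submission
  imports Defs
begin

(* For q' containing q, the symmetric difference of [[q]] and [[q']] is just [[q']] - [[q]],
   so comparing two generalizations by containment of difference is comparing them by
   containment; dually, below q the difference is [[q]] - [[q']] and the order reverses.
   Hence the two notions of minimal generalization (maximal specialization) coincide,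
   without using that q and E are well-formed. *)

lemma symdiff_subset_iff_of_subsets:
  assumes "A \<subseteq> B" and "A \<subseteq> C"
  shows "symdiff A B \<subseteq> symdiff A C \<longleftrightarrow> B \<subseteq> C"
  using assms unfolding symdiff_def by blast

lemma symdiff_subset_iff_of_supsets:
  assumes "B \<subseteq> A" and "C \<subseteq> A"
  shows "symdiff A B \<subseteq> symdiff A C \<longleftrightarrow> C \<subseteq> B"
  using assms unfolding symdiff_def by blast

lemma contained_iff_sem_subset:
  "contained TYPE('v) ar q1 q2 \<longleftrightarrow> (sem ar q1 :: ('r,'v) data_example set) \<subseteq> sem ar q2"
  unfolding contained_def sem_def by auto

lemma cod_le_iff_contained_above:
  assumes "contained TYPE('v) ar q q1" and "contained TYPE('v) ar q q2"
  shows "cod_le ar TYPE('v) q q1 q2 \<longleftrightarrow> contained TYPE('v) ar q1 q2"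
  using assms symdiff_subset_iff_of_subsets
  unfolding cod_le_def contained_iff_sem_subset by blast

lemma cod_le_iff_contained_below:
  assumes "contained TYPE('v) ar q1 q" and "contained TYPE('v) ar q2 q"
  shows "cod_le ar TYPE('v) q q1 q2 \<longleftrightarrow> contained TYPE('v) ar q2 q1"
  using assms symdiff_subset_iff_of_supsets
  unfolding cod_le_def contained_iff_sem_subset by blast

lemma cod_generalization_iff_cont_generalization:
  "pre_generalization (cod_le ar TYPE('v)) ar q E q' \<longleftrightarrow> cont_generalization ar q E q'"
  for E :: "('r,'v) examples"
proof -
  have "cod_le ar TYPE('v) q q'' q' \<and> \<not> cod_le ar TYPE('v) q q' q''
          \<longleftrightarrow> strictly_contained TYPE('v) ar q'' q'"
    if "gen_cond ar q E q''" and "gen_cond ar q E q'" for q''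
    using that cod_le_iff_contained_above[of ar q]
    unfolding gen_cond_def strictly_contained_def cq_equiv_def by blast
  then show ?thesis
    unfolding pre_generalization_def cont_generalization_def by blast
qed

lemma cod_specialization_iff_cont_specialization:
  "pre_specialization (cod_le ar TYPE('v)) ar q E q' \<longleftrightarrow> cont_specialization ar q E q'"
  for E :: "('r,'v) examples"
proof -
  have "cod_le ar TYPE('v) q q'' q' \<and> \<not> cod_le ar TYPE('v) q q' q''
          \<longleftrightarrow> strictly_contained TYPE('v) ar q' q''"
    if "spec_cond ar q E q''" and "spec_cond ar q E q'" for q''
    using that cod_le_iff_contained_below[of ar _ q]
    unfolding spec_cond_def strictly_contained_def cq_equiv_def by blast
  then show ?thesis
    unfolding pre_specialization_def cont_specialization_def by blast
qed

theorem proposition6: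
  fixes ar :: "'r \<Rightarrow> nat" and q q' :: "'r cq" and E :: "('r,'v) examples"
  assumes "annotated ar q E" and "is_cq ar q'"
  shows "(pre_generalization (cod_le ar TYPE('v)) ar q E q' \<longleftrightarrow> cont_generalization ar q E q')
       \<and> (pre_specialization (cod_le ar TYPE('v)) ar q E q' \<longleftrightarrow> cont_specialization ar q E q')"
  using cod_generalization_iff_cont_generalization cod_specialization_iff_cont_specialization
  by blast

end
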